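(* Let $m\ge 2$ be an integer and let $f(1,1,m)$ be the minimum number of sets in an antipodal $(1,m)$-fold cover of the circle $S^1$ with open sets. Then $f(1,1,m)=2+m$.
   Context: $S^1$ denotes the unit circle in $\mathbb{R}^{2}$ centered at the origin. A cover of $S^1$ is a (finite) family of subsets of $S^1$; it is an $n$-fold cover if every point belongs to at least $n$ of the sets. A cover is antipodal if none of its sets contains a pair of antipodal points $x,-x$. The open northern hemisphere is $\{x\in S^1: x_{2}>0\}$. For $m>n\ge 1$, an $(n,m)$-fold cover is an $n$-fold cover in which every point of the open northern hemisphere belongs to at least $m$ of the sets. *)

theory Defs
  imports "HOL-Analysis.Analysis"
begin

definition S1 :: "(real^2) set" where
  "S1 = sphere 0 1"

text \<open>A finite family of k sets, indexed by 0,...,k-1 (repetitions allowed),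
  is an antipodal (n,m)-fold cover of S^1 by open sets: each set is an open subset
  of S^1 (relative topology) containing no antipodal pair; every point of S^1 lies in
  at least n of the sets; every point of the open northern hemisphere (x_2 > 0)
  lies in at least m of the sets.\<close>
definition antipodal_open_nm_cover :: "nat \<Rightarrow> nat \<Rightarrow> nat \<Rightarrow> (nat \<Rightarrow> (real^2) set) \<Rightarrow> bool" where
  "antipodal_open_nm_cover n m k U \<longleftrightarrow>
     (\<forall>i<k. U i \<subseteq> S1 \<and> openin (top_of_set S1) (U i) \<and> (\<forall>x\<in>U i. - x \<notin> U i)) \<and>
     (\<forall>x\<in>S1. n \<le> card {i. i < k \<and> x \<in> U i}) \<and>
     (\<forall>x\<in>S1. x $ 2 > 0 \<longrightarrow> m \<le> card {i. i < k \<and> x \<in> U i})"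

definition f1 :: "nat \<Rightarrow> nat \<Rightarrow> nat" where
  "f1 n m = (LEAST k. \<exists>U. antipodal_open_nm_cover n m k U)"

end

theory Submission
  imports Defs
begin

text \<open>Upper bound: m copies of the open northern hemisphere together with the two sets
  \<open>{x\<^sub>1 < 1/2, x\<^sub>2 < 1/2}\<close> and \<open>{x\<^sub>1 > -1/2, x\<^sub>2 < 1/2}\<close>, which are antipodal because the
  circle avoids the square \<open>|x\<^sub>1|, |x\<^sub>2| < 1/2\<close>.

  Lower bound: if \<open>k \<le> m + 1\<close>, a point x of the open southern semicircle lies in at most
  one set, since \<open>-x\<close> already lies in m sets and no set contains both. So the sets
  partition the connected southern semicircle into disjoint open pieces, and one of them,
  say \<open>U\<^sub>a\<close>, contains it all. Both endpoints \<open>(\<plusminus>1, 0)\<close> lie in the closure of the semicircle,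
  so any open set containing one of them meets the semicircle and is therefore \<open>U\<^sub>a\<close>;
  hence \<open>U\<^sub>a\<close> contains an antipodal pair.\<close>

lemma S1_iff: "(x::real^2) \<in> S1 \<longleftrightarrow> (x$1)\<^sup>2 + (x$2)\<^sup>2 = 1"
proof -
  have "norm x = sqrt ((x$1)\<^sup>2 + (x$2)\<^sup>2)"
    unfolding norm_vec_def L2_set_def by (simp add: UNIV_2)
  then show ?thesis
    unfolding S1_def by simp
qed

lemma uminus_in_S1: "x \<in> S1 \<Longrightarrow> - x \<in> S1"
  unfolding S1_def by simp

lemma openin_S1_Collect: "open {x. P x} \<Longrightarrow> openin (top_of_set S1) {x\<in>S1. P x}"
  using openin_open_Int[of "{x. P x}" S1] by (simp add: Int_def conj_commute)

lemma S1_not_in_square: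
  assumes "x \<in> S1" "\<bar>x$1\<bar> < 1/2" "\<bar>x$2\<bar> < 1/2"
  shows False
proof -
  have "\<bar>x$1\<bar>\<^sup>2 < (1/2)\<^sup>2" "\<bar>x$2\<bar>\<^sup>2 < (1/2)\<^sup>2"
    using assms(2,3) by (simp_all only: power_strict_mono abs_ge_zero zero_less_numeral)
  with assms(1) show False
    unfolding S1_iff by (simp add: power_divide)
qed

definition minimal_antipodal_cover :: "nat \<Rightarrow> nat \<Rightarrow> (real^2) set" where
  "minimal_antipodal_cover m i =
     (if i < m then {x\<in>S1. x$2 > 0}
      else if i = m then {x\<in>S1. x$1 < 1/2 \<and> x$2 < 1/2}
      else {x\<in>S1. x$1 > -1/2 \<and> x$2 < 1/2})"

lemma minimal_antipodal_cover_set_antipodal: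
  assumes "x \<in> minimal_antipodal_cover m i"
  shows "- x \<notin> minimal_antipodal_cover m i"
proof
  assume "- x \<in> minimal_antipodal_cover m i"
  with assms have "x \<in> S1" and "i \<ge> m \<Longrightarrow> \<bar>x$1\<bar> < 1/2 \<and> \<bar>x$2\<bar> < 1/2"
    by (auto simp: minimal_antipodal_cover_def split: if_splits)
  moreover have "i < m \<Longrightarrow> False"
    using assms \<open>- x \<in> minimal_antipodal_cover m i\<close> by (simp add: minimal_antipodal_cover_def)
  ultimately show False
    using S1_not_in_square by fastforce
qed

lemma minimal_antipodal_cover_set_openin: "openin (top_of_set S1) (minimal_antipodal_cover m i)"
proof -
  have "open {x::real^2. x$2 > 0}" "open {x::real^2. x$1 < 1/2 \<and> x$2 < 1/2}"
    "open {x::real^2. x$1 > -1/2 \<and> x$2 < 1/2}"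
    by (intro open_Collect_conj open_halfspace_component_gt_cart open_halfspace_component_lt_cart)+
  then show ?thesis
    unfolding minimal_antipodal_cover_def by (auto intro!: openin_S1_Collect)
qed

lemma antipodal_open_cover_exists:
  assumes "0 < m"
  shows "antipodal_open_nm_cover 1 m (m + 2) (minimal_antipodal_cover m)"
  unfolding antipodal_open_nm_cover_def
proof (intro conjI ballI allI impI)
  fix i show "minimal_antipodal_cover m i \<subseteq> S1"
    by (auto simp: minimal_antipodal_cover_def)
  show "openin (top_of_set S1) (minimal_antipodal_cover m i)"
    by (rule minimal_antipodal_cover_set_openin)
  fix x assume "x \<in> minimal_antipodal_cover m i"
  then show "- x \<notin> minimal_antipodal_cover m i"
    by (rule minimal_antipodal_cover_set_antipodal)
next
  fix x :: "real^2" assume "x \<in> S1"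
  have "\<exists>j<m + 2. x \<in> minimal_antipodal_cover m j"
  proof (cases "x$2 > 0")
    case True
    with \<open>x \<in> S1\<close> assms show ?thesis
      by (intro exI[of _ 0]) (simp add: minimal_antipodal_cover_def)
  next
    case False
    with \<open>x \<in> S1\<close> show ?thesis
      by (cases "x$1 < 1/2")
        (auto simp: minimal_antipodal_cover_def intro: exI[of _ m] exI[of _ "Suc m"])
  qed
  then have "{i. i < m + 2 \<and> x \<in> minimal_antipodal_cover m i} \<noteq> {}" by blast
  then show "1 \<le> card {i. i < m + 2 \<and> x \<in> minimal_antipodal_cover m i}"
    by (simp add: Suc_le_eq card_gt_0_iff)
next
  fix x :: "real^2" assume "x \<in> S1" "x$2 > 0"
  then have "{..<m} \<subseteq> {i. i < m + 2 \<and> x \<in> minimal_antipodal_cover m i}"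
    by (auto simp: minimal_antipodal_cover_def)
  then show "m \<le> card {i. i < m + 2 \<and> x \<in> minimal_antipodal_cover m i}"
    using card_mono[of _ "{..<m}"] by fastforce
qed

lemma connected_subset_disjoint_open_cover:
  assumes "connected S" and "\<And>i. i \<in> I \<Longrightarrow> open (V i)" and "S \<subseteq> (\<Union>i\<in>I. V i)"
    and disj: "\<And>i j x. \<lbrakk>i \<in> I; j \<in> I; x \<in> S; x \<in> V i; x \<in> V j\<rbrakk> \<Longrightarrow> i = j"
    and "a \<in> I" and "V a \<inter> S \<noteq> {}"
  shows "S \<subseteq> V a"
proof -
  let ?W = "\<Union>i\<in>I - {a}. V i"
  have "V a \<inter> ?W \<inter> S = {}"
    using disj \<open>a \<in> I\<close> by blast
  moreover have "S \<subseteq> V a \<union> ?W"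
    using assms(3) by blast
  ultimately have "V a \<inter> S = {} \<or> ?W \<inter> S = {}"
    using connectedD[OF \<open>connected S\<close>, of "V a" ?W] assms(2,5) by blast
  with assms(3,6) show ?thesis by blast
qed

lemma antipodal_cover_card_pair:
  assumes "antipodal_open_nm_cover n m k U" and "x \<in> S1"
  shows "card {i. i < k \<and> x \<in> U i} + card {i. i < k \<and> - x \<in> U i} \<le> k"
proof -
  have "{i. i < k \<and> x \<in> U i} \<inter> {i. i < k \<and> - x \<in> U i} = {}"
    using assms(1) unfolding antipodal_open_nm_cover_def by auto
  then have "card {i. i < k \<and> x \<in> U i} + card {i. i < k \<and> - x \<in> U i}
      = card ({i. i < k \<and> x \<in> U i} \<union> {i. i < k \<and> - x \<in> U i})"
    by (simp add: card_Un_disjoint)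
  also have "\<dots> \<le> card {..<k}"
    by (rule card_mono) auto
  finally show ?thesis by simp
qed

lemma antipodal_cover_south_card_le_one:
  assumes "antipodal_open_nm_cover n m k U" and "k \<le> m + 1" and "x \<in> S1" and "x$2 < 0"
  shows "card {i. i < k \<and> x \<in> U i} \<le> 1"
proof -
  have "m \<le> card {i. i < k \<and> - x \<in> U i}"
    using assms(1,3,4) uminus_in_S1 unfolding antipodal_open_nm_cover_def by simp
  with antipodal_cover_card_pair[OF assms(1,3)] assms(2) show ?thesis
    by linarith
qed

definition circle_point :: "real \<Rightarrow> real^2" where
  "circle_point t = (\<chi> i. if i = 1 then cos t else sin t)"

lemma circle_point_nth [simp]: "circle_point t $ 1 = cos t" "circle_point t $ 2 = sin t"
  by (simp_all add: circle_point_def)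

lemma circle_point_in_S1: "circle_point t \<in> S1"
  by (simp add: S1_iff)

lemma continuous_on_circle_point: "continuous_on A circle_point"
  unfolding circle_point_def
proof (intro continuous_on_vec_lambda)
  show "continuous_on A (\<lambda>t. if i = 1 then cos t else sin t)" for i :: 2
    by (cases "i = 1") (simp_all add: continuous_on_cos continuous_on_sin continuous_on_id)
qed

lemma circle_point_2pi: "circle_point (2 * pi) = - circle_point pi"
  by (simp add: vec_eq_iff forall_2)

lemma open_meets_southern_arc:
  assumes "open V" and "t \<in> {pi..2*pi}" and "circle_point t \<in> V"
  shows "V \<inter> circle_point ` {pi<..<2*pi} \<noteq> {}"
proof -
  have "circle_point ` closure {pi<..<2*pi} \<subseteq> closure (circle_point ` {pi<..<2*pi})"
    by (rule continuous_image_closure_subset[OF continuous_on_circle_point[of UNIV]]) simp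
  moreover have "t \<in> closure {pi<..<2*pi}"
    using assms(2) by (simp add: closure_greaterThanLessThan)
  ultimately have "V \<inter> closure (circle_point ` {pi<..<2*pi}) \<noteq> {}"
    using assms(3) by blast
  with open_Int_closure_eq_empty[OF assms(1)] show ?thesis
    by blast
qed

lemma antipodal_open_cover_size_ge:
  assumes cover: "antipodal_open_nm_cover 1 m k U"
  shows "m + 2 \<le> k"
proof (rule ccontr)
  assume "\<not> m + 2 \<le> k"
  have antipodal: "x \<in> U i \<Longrightarrow> - x \<notin> U i" if "i < k" for i x
    using cover that unfolding antipodal_open_nm_cover_def by blast
  have covered: "\<exists>i<k. x \<in> U i" if "x \<in> S1" for x
  proof -
    have "1 \<le> card {i. i < k \<and> x \<in> U i}"
      using cover that unfolding antipodal_open_nm_cover_def by blast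
    then show ?thesis
      by (metis (mono_tags, lifting) Collect_empty_eq card.empty not_one_le_zero)
  qed
  have "\<forall>i<k. \<exists>V. open V \<and> U i = S1 \<inter> V"
    using cover unfolding antipodal_open_nm_cover_def by (meson openin_open)
  then obtain V where V: "\<And>i. i < k \<Longrightarrow> open (V i)" "\<And>i. i < k \<Longrightarrow> U i = S1 \<inter> V i"
    by metis
  let ?arc = "circle_point ` {pi<..<2*pi}"
  have unique_on_arc: "i = j"
    if "i < k" "j < k" "x \<in> ?arc" "x \<in> V i" "x \<in> V j" for i j x
  proof -
    have "x \<in> S1" "x$2 < 0"
      using \<open>x \<in> ?arc\<close> circle_point_in_S1 by (auto intro: sin_lt_zero)
    with antipodal_cover_south_card_le_one[OF cover] \<open>\<not> m + 2 \<le> k\<close>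
    have "card {i. i < k \<and> x \<in> U i} \<le> 1" by simp
    moreover have "i \<in> {i. i < k \<and> x \<in> U i}" "j \<in> {i. i < k \<and> x \<in> U i}"
      using that V(2) \<open>x \<in> S1\<close> by auto
    ultimately show "i = j"
      by (auto simp: card_le_Suc0_iff_eq)
  qed
  have meets_arc: "V i \<inter> ?arc \<noteq> {}" if "i < k" "circle_point t \<in> U i" "t \<in> {pi..2*pi}" for i t
    using that V by (intro open_meets_southern_arc) auto
  obtain a where a: "a < k" "circle_point pi \<in> U a"
    using covered circle_point_in_S1 by blast
  have "?arc \<subseteq> V a"
  proof (rule connected_subset_disjoint_open_cover[where I = "{..<k}"])
    show "connected ?arc"
      by (intro connected_continuous_image continuous_on_circle_point connected_Ioo)
    show "?arc \<subseteq> (\<Union>i\<in>{..<k}. V i)"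
      using covered circle_point_in_S1 V(2) by blast
    show "V a \<inter> ?arc \<noteq> {}"
      using meets_arc a by simp
  qed (use V(1) unique_on_arc a(1) in auto)
  obtain b where b: "b < k" "circle_point (2*pi) \<in> U b"
    using covered circle_point_in_S1 by blast
  obtain x where "x \<in> V b" "x \<in> ?arc"
    using meets_arc[OF b] by auto
  then have "b = a"
    using \<open>?arc \<subseteq> V a\<close> unique_on_arc[OF b(1) a(1)] by blast
  with b have "- circle_point pi \<in> U a"
    by (simp add: circle_point_2pi)
  with antipodal[OF a] show False
    by blast
qed

theorem proposition1:
  fixes m :: nat
  assumes "m \<ge> 2"
  shows "f1 1 m = 2 + m"
  unfolding f1_def
proof (rule Least_equality)
  show "\<exists>U. antipodal_open_nm_cover 1 m (2 + m) U"
    using antipodal_open_cover_exists[of m] assms by (auto simp: add.commute)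
  show "2 + m \<le> k" if "\<exists>U. antipodal_open_nm_cover 1 m k U" for k
    using that antipodal_open_cover_size_ge by (auto simp: add.commute)
qed

end
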